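(* Let $F_1,F_2$ be CCZ-equivalent monomial power permutations of $GF(2^m)$. Then $V^*_{F_1}=V^*_{F_2}$ and $v_{F_1}=v_{F_2}$.
   Context: $n=2^m-1$; a monomial power permutation is $F(x)=x^t$ with $\gcd(t,n)=1$. $S=STS(\mathcal H^n)$ is the set of 3-subsets $\{a,b,c\}$ of nonzero elements with $a+b+c=0$. $v_F(a)=|\{x+F^{-1}(a+F(x)) : x\in GF(2^m)\}|$; with $\{a,a_i,a+a_i\}$ ($i=1,\dots,2^{m-1}-1$) the triples of $S$ through $a$ and $z_i=F(F^{-1}(a_i)+F^{-1}(a+a_i))$, $V^*_F(a)$ is the multiset of multiplicities of the distinct elements of the multiset $\{z_i\}$. For monomial $F$ these do not depend on $a$, and $v_F=v_F(1)$, $V^*_F=V^*_F(1)$. $\mathcal C_F$ is the binary linear code of length $n$ with parity-check matrix whose columns are $\binom{x}{F(x)}$ for nonzero $x$; $\mathcal C_F^*$ is its extension by an overall parity bit; $F_1,F_2$ are CCZ-equivalent if $\mathcal C^*_{F_1}$ and $\mathcal C^*_{F_2}$ are equivalent (one obtained from the other by a coordinate permutation). *)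

theory Defs
  imports Main "HOL-Library.Multiset"
begin

text \<open>The field GF(2^m) is modelled by a finite field type 'a with CARD('a) = 2^m.
  F^{-1} is the Hilbert-choice inverse inv F (F is a bijection in all uses).\<close>

definition v_at :: "('a::field \<Rightarrow> 'a) \<Rightarrow> 'a \<Rightarrow> nat" where
  "v_at F a = card {x + inv F (a + F x) | x. True}"

definition v_F :: "('a::field \<Rightarrow> 'a) \<Rightarrow> nat" where
  "v_F F = v_at F 1"

text \<open>Triples of STS through a, represented by the unordered pairs {a_i, a + a_i}.\<close>
definition triple_pairs :: "'a::field \<Rightarrow> 'a set set" where
  "triple_pairs a = {{b, a + b} | b. b \<noteq> 0 \<and> b \<noteq> a}"

text \<open>z_i = F(F^{-1}(a_i) + F^{-1}(a + a_i)); the sum over the pair is symmetric.\<close>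
definition z_mset :: "('a::field \<Rightarrow> 'a) \<Rightarrow> 'a \<Rightarrow> 'a multiset" where
  "z_mset F a = image_mset (\<lambda>p. F (\<Sum>y\<in>p. inv F y)) (mset_set (triple_pairs a))"

definition Vstar_at :: "('a::field \<Rightarrow> 'a) \<Rightarrow> 'a \<Rightarrow> nat multiset" where
  "Vstar_at F a = image_mset (count (z_mset F a)) (mset_set (set_mset (z_mset F a)))"

definition Vstar :: "('a::field \<Rightarrow> 'a) \<Rightarrow> nat multiset" where
  "Vstar F = Vstar_at F 1"

text \<open>Binary code C_F with parity check columns (x, F x), x nonzero; a binary word is
  identified with its support, a subset of the nonzero field elements.\<close>
definition code_F :: "('a::field \<Rightarrow> 'a) \<Rightarrow> 'a set set" where
  "code_F F = {S. S \<subseteq> - {0} \<and> (\<Sum>x\<in>S. x) = 0 \<and> (\<Sum>x\<in>S. F x) = 0}"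

text \<open>Coordinates of the extended code: Some x for nonzero x, None for the parity bit.\<close>
definition ext_coords :: "'a::field option set" where
  "ext_coords = insert None (Some ` (- {0}))"

definition ext_code_F :: "('a::field \<Rightarrow> 'a) \<Rightarrow> 'a option set set" where
  "ext_code_F F = {Some ` S \<union> (if odd (card S) then {None} else {}) | S. S \<in> code_F F}"

definition codes_equivalent :: "'b set \<Rightarrow> 'b set set \<Rightarrow> 'b set set \<Rightarrow> bool" where
  "codes_equivalent I C1 C2 \<longleftrightarrow> (\<exists>\<sigma>. bij_betw \<sigma> I I \<and> (\<lambda>S. \<sigma> ` S) ` C1 = C2)"

definition CCZ_equiv :: "('a::field \<Rightarrow> 'a) \<Rightarrow> ('a \<Rightarrow> 'a) \<Rightarrow> bool" where
  "CCZ_equiv F1 F2 \<longleftrightarrow> codes_equivalent ext_coords (ext_code_F F1) (ext_code_F F2)"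

end

theory Submission
  imports Defs
begin

text \<open>Identify the parity coordinate of the extended code with the field element \<open>0\<close>. The
  weight-4 words then become the 4-sets \<open>T\<close> with \<open>\<Sum>T = 0 = \<Sum>F`T\<close>, and a coordinate
  permutation between the extended codes is a permutation of the field carrying these 4-sets onto
  each other. Call two 2-sets linked if they coincide or their union is such a 4-set. For a
  multiplicative permutation \<open>F\<close> of a field of characteristic 2 the class of \<open>{x, y}\<close> has
  size \<open>K(x + y, F x + F y)\<close>, where \<open>2 K(c, b)\<close> is the difference distribution table of \<open>F\<close>,
  and \<open>K(a c, F a b) = K(c, b)\<close>. Hence the permutation preserves the number of 2-sets with class
  size \<open>k\<close>, which is \<open>(2^m - 1) k\<close> times the number of \<open>b\<close> with \<open>K(1, b) = k\<close>, and it
  also reveals \<open>K(1, 1)\<close>, the common class size of all 2-sets through the parity coordinate.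
  Both \<open>V\<^sup>*\<^sub>F\<close> and \<open>v\<^sub>F\<close> are determined by these data.\<close>

lemma card_power_of_two_imp_one_add_one:
  assumes "card (UNIV :: 'a::{field,finite} set) = 2 ^ m"
  shows "(1::'a) + 1 = 0"
proof -
  have "(\<Sum>x\<in>UNIV. x + (1::'a)) = (\<Sum>x\<in>UNIV. x)"
    by (rule sum.reindex_bij_betw) (rule bij_betw_byWitness[where f'="\<lambda>x. x - 1"], auto)
  hence "of_nat (card (UNIV::'a set)) = (0::'a)"
    by (simp add: sum.distrib)
  hence "(2::'a) ^ m = 0" using assms by simp
  thus ?thesis by simp
qed

lemma power_card_minus_one:
  assumes "(x::'a::{field,finite}) \<noteq> 0"
  shows "x ^ (card (UNIV::'a set) - 1) = 1"
proof -
  let ?S = "- {0::'a}"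
  have "bij_betw ((*) x) ?S ?S"
    by (rule bij_betw_byWitness[where f'="\<lambda>y. y / x"]) (use assms in auto)
  hence "(\<Prod>y\<in>?S. x * y) = (\<Prod>y\<in>?S. y)"
    by (rule prod.reindex_bij_betw)
  hence "x ^ card ?S * (\<Prod>y\<in>?S. y) = (\<Prod>y\<in>?S. y)"
    by (simp add: prod.distrib)
  hence "x ^ card ?S = 1" by simp
  moreover have "card ?S = card (UNIV::'a set) - 1"
    by (simp add: Compl_eq_Diff_UNIV card_Diff_singleton)
  ultimately show ?thesis by simp
qed

lemma inj_power_if_coprime:
  assumes t: "0 < t" "coprime t (card (UNIV::'a::{field,finite} set) - 1)"
  shows "inj (\<lambda>x::'a. x ^ t)"
proof (rule injI)
  fix x y :: 'a assume eq: "x ^ t = y ^ t"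
  show "x = y"
  proof (cases "y = 0")
    case True thus ?thesis using eq t by (simp add: zero_power)
  next
    case False
    hence "x \<noteq> 0" using eq t by (metis power_not_zero zero_power)
    let ?z = "x / y" and ?n = "card (UNIV::'a set) - 1"
    have "?z \<noteq> 0" using \<open>x \<noteq> 0\<close> False by simp
    have zt: "?z ^ t = 1" using eq False by (simp add: power_divide)
    have zn: "?z ^ ?n = 1" using power_card_minus_one[OF \<open>?z \<noteq> 0\<close>] .
    obtain i j where "t * i = ?n * j + gcd t ?n"
      using bezout_nat[of t ?n] t by auto
    hence ij: "t * i = ?n * j + 1" using t by simp
    have "?z = ?z ^ (?n * j + 1)" using zn by (simp add: power_mult power_add)
    also have "\<dots> = ?z ^ (t * i)" by (simp only: ij)
    also have "\<dots> = 1" using zt by (simp add: power_mult)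
    finally show ?thesis using False by simp
  qed
qed

lemma card_UNIV_field_ge_two: "2 \<le> card (UNIV :: 'a::{field,finite} set)"
  using card_mono[of UNIV "{0::'a, 1}"] by simp

lemma card_le_two_field_elements:
  assumes "card (UNIV :: 'a::{field,finite} set) \<le> 2"
  shows "(x::'a) = 0 \<or> x = 1"
proof -
  have "card {0::'a, 1} = card (UNIV :: 'a set)"
    using assms card_UNIV_field_ge_two[where 'a='a] by simp
  hence "{0::'a, 1} = UNIV" by (rule card_subset_eq[OF finite_UNIV subset_UNIV])
  thus ?thesis by auto
qed

lemma card_Collect_bij:
  assumes "bij g" and "\<And>x. P x \<longleftrightarrow> Q (g x)"
  shows "card {x. P x} = card {x. Q x}"
proof -
  have "g ` {x. P x} = {x. Q x}"
    using assms by (simp add: bij_image_Collect_eq bij_is_surj surj_f_inv_f)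
  thus ?thesis using assms(1) by (metis bij_is_inj card_image inj_on_subset subset_UNIV)
qed

lemma card_Collect_bij_image:
  assumes "bij g" and "\<And>T. P T \<longleftrightarrow> Q (g ` T)"
  shows "card {T. P T} = card {T. Q T}"
proof -
  have "bij ((`) g)" using bij_betw_image_Pow[OF assms(1)] by simp
  thus ?thesis using assms(2) by (rule card_Collect_bij)
qed

lemma count_image_mset_mset_set:
  assumes "finite A"
  shows "count (image_mset f (mset_set A)) x = card {a\<in>A. f a = x}"
proof -
  have "count (image_mset f (mset_set A)) x = (\<Sum>y\<in>f -` {x} \<inter> A. 1)"
    using assms by (simp add: count_image_mset)
  also have "\<dots> = card {a\<in>A. f a = x}" by (simp add: Int_commute Collect_conj_eq vimage_def)
  finally show ?thesis .
qed

definition pair_class_size :: "'a set set \<Rightarrow> 'a set \<Rightarrow> nat" where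
  "pair_class_size E p = card {q. card q = 2 \<and> (q = p \<or> p \<union> q \<in> E)}"

definition pairs_with_class_size :: "'a set set \<Rightarrow> nat \<Rightarrow> nat" where
  "pairs_with_class_size E k = card {p. card p = 2 \<and> pair_class_size E p = k}"

definition partners_with_class_size :: "'a set set \<Rightarrow> 'a \<Rightarrow> nat \<Rightarrow> nat" where
  "partners_with_class_size E x k = card {y. y \<noteq> x \<and> pair_class_size E {x, y} = k}"

definition uniform_points :: "'a set set \<Rightarrow> nat \<Rightarrow> nat \<Rightarrow> nat" where
  "uniform_points E n k0 =
     card {x. \<forall>k. partners_with_class_size E x k = (if k = k0 then n else 0)}"

locale set_family_iso =
  fixes g :: "'a \<Rightarrow> 'a" and E1 E2 :: "'a set set"
  assumes bij: "bij g" and family_iff: "\<And>T. T \<in> E1 \<longleftrightarrow> g ` T \<in> E2"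
begin

lemma inj: "inj g"
  using bij by (simp add: bij_is_inj)

lemma card_image_g [simp]: "card (g ` p) = card p"
  using inj by (simp add: card_image inj_on_subset)

lemma pair_class_size_image: "pair_class_size E2 (g ` p) = pair_class_size E1 p"
  unfolding pair_class_size_def
  by (rule card_Collect_bij_image[OF bij, symmetric])
     (simp add: family_iff image_Un inj inj_image_eq_iff)

lemma pairs_with_class_size_eq: "pairs_with_class_size E2 k = pairs_with_class_size E1 k"
  unfolding pairs_with_class_size_def
  by (rule card_Collect_bij_image[OF bij, symmetric]) (simp add: pair_class_size_image)

lemma partners_with_class_size_image:
  "partners_with_class_size E2 (g x) k = partners_with_class_size E1 x k"
  unfolding partners_with_class_size_def
proof (rule card_Collect_bij[OF bij, symmetric])
  fix y
  show "y \<noteq> x \<and> pair_class_size E1 {x, y} = k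
          \<longleftrightarrow> g y \<noteq> g x \<and> pair_class_size E2 {g x, g y} = k"
    using pair_class_size_image[of "{x, y}"] inj by (simp add: inj_eq)
qed

lemma uniform_points_eq: "uniform_points E2 n k0 = uniform_points E1 n k0"
  unfolding uniform_points_def
  by (rule card_Collect_bij[OF bij, symmetric]) (simp add: partners_with_class_size_image)

end

locale char2_mult_perm =
  fixes F :: "'a::{field,finite} \<Rightarrow> 'a"
  assumes one_add_one: "(1::'a) + 1 = 0"
    and bij: "bij F"
    and mult: "F (x * y) = F x * F y"
begin

lemma add_self [simp]: "(x::'a) + x = 0"
proof -
  have "x + x = x * (1 + 1)" by (simp add: algebra_simps)
  also have "\<dots> = 0" by (simp only: one_add_one mult_zero_right)
  finally show ?thesis .
qed

lemma add_eq_0_iff: "(x::'a) + y = 0 \<longleftrightarrow> x = y"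
  by (metis add_self add_diff_cancel_left' diff_add_cancel)

lemma add_eq_iff_swap: "(x::'a) + y = z \<longleftrightarrow> y = x + z"
  by (metis add.assoc add.left_neutral add_self)

lemma inj: "inj F"
  using bij by (simp add: bij_is_inj)

lemma eq_iff [simp]: "F x = F y \<longleftrightarrow> x = y"
  using inj by (auto dest: injD)

lemma inv_F [simp]: "inv F (F x) = x"
  using inj by simp

lemma F_inv [simp]: "F (inv F y) = y"
  using bij by (simp add: bij_is_surj surj_f_inv_f)

lemma F_0 [simp]: "F 0 = 0"
proof (rule ccontr)
  assume "F 0 \<noteq> 0"
  have "F 0 = F 0 * F x" for x using mult[of 0 x] by simp
  hence "F x = 1" for x using \<open>F 0 \<noteq> 0\<close> by (metis mult_cancel_left1)
  hence "F 0 = F 1" by simp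
  thus False by simp
qed

lemma F_1 [simp]: "F 1 = 1"
proof -
  have "F 1 * F 1 = F 1 * 1" using mult[of 1 1] by simp
  moreover have "F 1 \<noteq> 0" using eq_iff[of 1 0] by simp
  ultimately show ?thesis by (metis mult_left_cancel)
qed

lemma eq_0_iff [simp]: "F x = 0 \<longleftrightarrow> x = 0"
  using eq_iff[of x 0] by simp

lemma F_inverse: "F (inverse x) = inverse (F x)"
proof (cases "x = 0")
  case False
  hence "F x * F (inverse x) = 1" by (simp flip: mult)
  thus ?thesis by (simp add: inverse_unique)
qed simp

lemma bij_F_inverse: "bij (\<lambda>c. F (inverse c))"
proof -
  have "bij (inverse :: 'a \<Rightarrow> 'a)"
    by (rule bij_betw_byWitness[where f'=inverse]) auto
  thus ?thesis using bij by (simp add: bij_comp[unfolded comp_def])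
qed

lemma bij_mult: "a \<noteq> (0::'a) \<Longrightarrow> bij ((*) a)"
  by (rule bij_betw_byWitness[where f'="\<lambda>x. x / a"]) auto

lemma sum_mult_image: "a \<noteq> (0::'a) \<Longrightarrow> (\<Sum>x\<in>(*) a ` q. x) = a * (\<Sum>x\<in>q. x)"
  by (simp add: sum.reindex inj_on_def sum_distrib_left)

lemma sum_F_mult_image: "a \<noteq> (0::'a) \<Longrightarrow> (\<Sum>x\<in>(*) a ` q. F x) = F a * (\<Sum>x\<in>q. F x)"
  by (simp add: sum.reindex inj_on_def sum_distrib_left mult)

lemma pair_sum_nonzero: "card q = 2 \<Longrightarrow> (\<Sum>x\<in>q. x) \<noteq> (0::'a)"
  by (auto simp: card_2_iff add_eq_0_iff)

lemma pair_sum_F_nonzero: "card q = 2 \<Longrightarrow> (\<Sum>x\<in>q. F x) \<noteq> 0"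
  by (auto simp: card_2_iff add_eq_0_iff)

text \<open>\<open>2 * pair_count c b\<close> is the entry of the difference distribution table of \<open>F\<close>
  at \<open>(c, b)\<close>.\<close>
definition pair_count :: "'a \<Rightarrow> 'a \<Rightarrow> nat" where
  "pair_count c b = card {q. card q = 2 \<and> (\<Sum>x\<in>q. x) = c \<and> (\<Sum>x\<in>q. F x) = b}"

lemma pair_count_mult:
  assumes "a \<noteq> 0" shows "pair_count (a * c) (F a * b) = pair_count c b"
  unfolding pair_count_def
  by (rule card_Collect_bij_image[OF bij_mult[OF assms], symmetric])
     (simp add: assms card_image inj_on_def sum_mult_image sum_F_mult_image)

lemma pair_count_inverse: "pair_count c 1 = pair_count 1 (F (inverse c))"
proof (cases "c = 0")
  case True
  have "pair_count 0 b = 0" and "pair_count c' 0 = 0" for b c'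
    unfolding pair_count_def using pair_sum_nonzero pair_sum_F_nonzero
    by (metis (mono_tags, lifting) card.empty empty_Collect_eq)+
  thus ?thesis using True by simp
next
  case False
  thus ?thesis using pair_count_mult[of "inverse c" c 1] by simp
qed

lemma pair_count_1_1_pos: "0 < pair_count 1 1"
proof -
  have "{0, 1} \<in> {q. card q = 2 \<and> (\<Sum>x\<in>q. x) = 1 \<and> (\<Sum>x\<in>q. F x) = (1::'a)}" by simp
  hence "{q. card q = 2 \<and> (\<Sum>x\<in>q. x) = 1 \<and> (\<Sum>x\<in>q. F x) = (1::'a)} \<noteq> {}" by blast
  thus ?thesis unfolding pair_count_def by (simp add: card_gt_0_iff)
qed

lemma pair_eq_insert_sum:
  assumes "card p = 2" and "u \<in> (p :: 'a set)"
  shows "p = {u, u + (\<Sum>x\<in>p. x)}"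
proof -
  obtain x y where "x \<noteq> y" "p = {x, y}" using assms(1) by (auto simp: card_2_iff)
  moreover have "x + (x + y) = y" by (simp add: add.assoc[symmetric])
  moreover have "y + (x + y) = x" by (simp add: add.left_commute[of y x])
  ultimately show ?thesis using assms(2) by auto
qed

text \<open>Supports of the weight-4 words of the extended code, the field element \<open>0\<close> standing
  for the parity coordinate (see \<open>weight4_words_iff\<close>).\<close>
definition weight4_words :: "'a set set" where
  "weight4_words = {T. card T = 4 \<and> (\<Sum>x\<in>T. x) = 0 \<and> (\<Sum>x\<in>T. F x) = 0}"

lemma pair_union_weight4_iff:
  assumes p: "card p = 2" and q: "card q = 2"
  shows "(q = p \<or> p \<union> q \<in> weight4_words) \<longleftrightarrow>
         (\<Sum>x\<in>q. x) = (\<Sum>x\<in>p. x) \<and> (\<Sum>x\<in>q. F x) = (\<Sum>x\<in>p. F x)"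
proof -
  have fin: "finite p" "finite q" using p q by (auto intro: card_ge_0_finite)
  have "card (p \<inter> q) = 0 \<longleftrightarrow> p \<inter> q = {}" using fin by simp
  hence card4: "card (p \<union> q) = 4 \<longleftrightarrow> p \<inter> q = {}"
    using card_Un_Int[OF fin] p q by auto
  have sum_union: "(\<Sum>x\<in>p \<union> q. f x) = 0 \<longleftrightarrow> sum f q = sum f p"
    if "p \<inter> q = {}" for f :: "'a \<Rightarrow> 'a"
  proof -
    have "(\<Sum>x\<in>p \<union> q. f x) = sum f p + sum f q"
      using that fin by (simp add: sum.union_disjoint)
    thus ?thesis by (auto simp: add_eq_0_iff)
  qed
  have disjoint: "p \<inter> q = {}" if "q \<noteq> p" "(\<Sum>x\<in>q. x) = (\<Sum>x\<in>p. x)"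
  proof (rule ccontr)
    assume "p \<inter> q \<noteq> {}"
    then obtain u where "u \<in> p" "u \<in> q" by blast
    hence "q = p" using pair_eq_insert_sum[OF p] pair_eq_insert_sum[OF q] that(2) by metis
    with that(1) show False by contradiction
  qed
  show ?thesis
    unfolding weight4_words_def using card4 sum_union disjoint by auto
qed

lemma pair_class_size_weight4:
  assumes "card p = 2"
  shows "pair_class_size weight4_words p = pair_count (\<Sum>x\<in>p. x) (\<Sum>x\<in>p. F x)"
  unfolding pair_class_size_def pair_count_def
  using pair_union_weight4_iff[OF assms] by (metis (lifting))

lemma card_nonzero_elements: "card (- {0::'a}) = card (UNIV::'a set) - 1"
  by (simp add: Compl_eq_Diff_UNIV card_Diff_singleton)

lemma card_pairs_sum_one:
  "card {p. card p = 2 \<and> (\<Sum>x\<in>p. x) = 1 \<and> pair_count 1 (\<Sum>x\<in>p. F x) = k}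
     = k * card {b. pair_count 1 b = k}"
proof -
  define B where "B b = {p. card p = 2 \<and> (\<Sum>x\<in>p. x) = (1::'a) \<and> (\<Sum>x\<in>p. F x) = b}" for b
  have "{p. card p = 2 \<and> (\<Sum>x\<in>p. x) = 1 \<and> pair_count 1 (\<Sum>x\<in>p. F x) = k}
        = (\<Union>b\<in>{b. pair_count 1 b = k}. B b)"
    unfolding B_def by auto
  also have "card \<dots> = (\<Sum>b\<in>{b. pair_count 1 b = k}. card (B b))"
    by (rule card_UN_disjoint) (auto simp: B_def)
  also have "\<dots> = (\<Sum>b\<in>{b. pair_count 1 b = k}. k)"
    by (rule sum.cong) (auto simp: B_def pair_count_def)
  finally show ?thesis by simp
qed

lemma pairs_with_class_size_weight4:
  "pairs_with_class_size weight4_words k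
     = (card (UNIV::'a set) - 1) * (k * card {b. pair_count 1 b = k})"
proof -
  define A where "A a = {p. card p = 2 \<and> (\<Sum>x\<in>p. x) = a \<and> pair_count a (\<Sum>x\<in>p. F x) = k}" for a
  have card_A: "card (A a) = card (A 1)" if "a \<noteq> 0" for a
  proof -
    have "pair_count a (F a * s) = pair_count 1 s" for s
      using pair_count_mult[OF that, of 1 s] by simp
    thus ?thesis unfolding A_def
      by (intro card_Collect_bij_image[OF bij_mult[OF that], symmetric])
         (simp add: that card_image inj_on_def sum_mult_image sum_F_mult_image)
  qed
  have "{p. card p = 2 \<and> pair_class_size weight4_words p = k} = (\<Union>a\<in>- {0}. A a)"
    using pair_sum_nonzero by (auto simp: A_def pair_class_size_weight4)
  hence "pairs_with_class_size weight4_words k = card (\<Union>a\<in>- {0}. A a)"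
    unfolding pairs_with_class_size_def by simp
  also have "\<dots> = (\<Sum>a\<in>- {0}. card (A a))"
    by (rule card_UN_disjoint) (auto simp: A_def)
  also have "\<dots> = (\<Sum>a\<in>- {0::'a}. card (A 1))"
    by (rule sum.cong[OF refl], rule card_A) simp
  also have "\<dots> = (card (UNIV::'a set) - 1) * card (A 1)"
    by (simp add: card_nonzero_elements)
  finally show ?thesis unfolding A_def card_pairs_sum_one .
qed

lemma partners_with_class_size_weight4:
  "partners_with_class_size weight4_words x k = card {y. y \<noteq> x \<and> pair_count (x + y) (F x + F y) = k}"
  unfolding partners_with_class_size_def
  by (rule arg_cong[where f = card]) (auto simp: pair_class_size_weight4)

lemma partners_with_class_size_weight4_0:
  "partners_with_class_size weight4_words 0 k
     = (if k = pair_count 1 1 then card (UNIV::'a set) - 1 else 0)"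
proof -
  have "pair_count y (F y) = pair_count 1 1" if "y \<noteq> 0" for y
    using pair_count_mult[OF that, of 1 1] by simp
  hence "{y. y \<noteq> 0 \<and> pair_count (0 + y) (F 0 + F y) = k} = (if k = pair_count 1 1 then - {0} else {})"
    by auto
  thus ?thesis unfolding partners_with_class_size_weight4 by (simp add: card_nonzero_elements)
qed

lemma partners_with_class_size_weight4_nonzero:
  assumes "x \<noteq> 0"
  shows "partners_with_class_size weight4_words x k = partners_with_class_size weight4_words 1 k"
  unfolding partners_with_class_size_weight4
proof (rule card_Collect_bij[OF bij_mult[OF assms], symmetric])
  fix y
  have "pair_count (x + x * y) (F x + F (x * y)) = pair_count (x * (1 + y)) (F x * (1 + F y))"
    by (simp add: algebra_simps mult)
  also have "\<dots> = pair_count (1 + y) (1 + F y)" by (rule pair_count_mult[OF assms])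
  finally show "(y \<noteq> 1 \<and> pair_count (1 + y) (F 1 + F y) = k)
      \<longleftrightarrow> (x * y \<noteq> x \<and> pair_count (x + x * y) (F x + F (x * y)) = k)"
    using assms by simp
qed

lemma uniform_points_weight4:
  "uniform_points weight4_words (card (UNIV::'a set) - 1) k0
     = (if k0 = pair_count 1 1 then 1 else 0)
     + (if \<forall>k. partners_with_class_size weight4_words 1 k
                = (if k = k0 then card (UNIV::'a set) - 1 else 0)
        then card (UNIV::'a set) - 1 else 0)"
proof -
  let ?n = "card (UNIV::'a set) - 1"
  let ?Q = "\<lambda>x. \<forall>k. partners_with_class_size weight4_words x k = (if k = k0 then ?n else 0)"
  have "0 < ?n" using card_UNIV_field_ge_two[where 'a='a] by simp
  hence Q_0: "?Q 0 \<longleftrightarrow> k0 = pair_count 1 1"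
    by (auto simp: partners_with_class_size_weight4_0 dest: spec[of _ "pair_count 1 1"])
  have Q_nonzero: "?Q x \<longleftrightarrow> ?Q 1" if "x \<noteq> 0" for x
    by (simp only: partners_with_class_size_weight4_nonzero[OF that])
  have "{x. ?Q x} = (if k0 = pair_count 1 1 then {0} else {}) \<union> (if ?Q 1 then - {0} else {})"
  proof (rule set_eqI)
    fix x
    show "x \<in> {x. ?Q x} \<longleftrightarrow>
        x \<in> (if k0 = pair_count 1 1 then {0} else {}) \<union> (if ?Q 1 then - {0} else {})"
      using Q_0 Q_nonzero[of x] by (cases "x = 0") auto
  qed
  thus ?thesis unfolding uniform_points_def by (auto simp: card_nonzero_elements card_Un_disjoint)
qed

lemma uniform_points_weight4_mod:
  "uniform_points weight4_words (card (UNIV::'a set) - 1) k0 mod (card (UNIV::'a set) - 1)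
     = (if k0 = pair_count 1 1 then 1 else 0) mod (card (UNIV::'a set) - 1)"
proof -
  have "(a + (if P then n else 0)) mod n = a mod n" for a n :: nat and P
    by (cases P) simp_all
  thus ?thesis unfolding uniform_points_weight4 .
qed

lemma triple_pairs_eq:
  assumes "a \<noteq> (0::'a)"
  shows "triple_pairs a = {p. card p = 2 \<and> (\<Sum>x\<in>p. x) = a \<and> 0 \<notin> p}"
proof (rule set_eqI, rule iffI)
  fix p assume "p \<in> triple_pairs a"
  then obtain b where b: "p = {b, a + b}" "b \<noteq> 0" "b \<noteq> a" unfolding triple_pairs_def by auto
  moreover have "b + (a + b) = a" by (simp add: add.left_commute[of b a])
  moreover have "b \<noteq> a + b" "a + b \<noteq> 0" using assms b(3) by (auto simp: add_eq_0_iff)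
  ultimately show "p \<in> {p. card p = 2 \<and> (\<Sum>x\<in>p. x) = a \<and> 0 \<notin> p}" by auto
next
  fix p assume "p \<in> {p. card p = 2 \<and> (\<Sum>x\<in>p. x) = a \<and> 0 \<notin> p}"
  hence p: "card p = 2" "(\<Sum>x\<in>p. x) = a" "0 \<notin> p" by auto
  then obtain x where "x \<in> p" by fastforce
  hence "p = {x, x + a}" using pair_eq_insert_sum[OF p(1)] p(2) by simp
  moreover have "x \<noteq> a" using \<open>p = {x, x + a}\<close> p(3) by auto
  ultimately show "p \<in> triple_pairs a"
    unfolding triple_pairs_def using \<open>x \<in> p\<close> p(3) by (auto simp: add.commute)
qed

lemma count_z_mset_F:
  "count (z_mset F 1) (F c) = pair_count c 1 - (if c = 1 then 1 else 0)"
proof -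
  let ?S = "{q. card q = 2 \<and> (\<Sum>x\<in>q. x) = c \<and> (\<Sum>x\<in>q. F x) = (1::'a)}"
  have "count (z_mset F 1) (F c) = card {p \<in> triple_pairs 1. F (\<Sum>y\<in>p. inv F y) = F c}"
    unfolding z_mset_def by (rule count_image_mset_mset_set) simp
  also have "\<dots> = card {q. q \<in> ?S - {{0, 1}}}"
  proof (rule card_Collect_bij_image[OF bij, symmetric])
    fix q :: "'a set"
    have "inj_on F q" using inj inj_on_subset by blast
    hence "card (F ` q) = card q" "(\<Sum>y\<in>F ` q. inv F y) = (\<Sum>x\<in>q. x)"
      "(\<Sum>y\<in>F ` q. y) = (\<Sum>x\<in>q. F x)"
      by (simp_all add: card_image sum.reindex)
    moreover have "card q = 2 \<and> (\<Sum>x\<in>q. F x) = 1 \<Longrightarrow> 0 \<in> q \<longleftrightarrow> q = {0, 1}"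
      using pair_eq_insert_sum[of "F ` q" 0] \<open>inj_on F q\<close>
      by (auto simp: card_image sum.reindex inj_image_eq_iff[OF inj, of q "{0, 1}", simplified])
    ultimately show "q \<in> ?S - {{0, 1}} \<longleftrightarrow>
        F ` q \<in> triple_pairs 1 \<and> F (\<Sum>y\<in>F ` q. inv F y) = F c"
      by (auto simp: triple_pairs_eq)
  qed
  also have "\<dots> = pair_count c 1 - (if c = 1 then 1 else 0)"
    unfolding pair_count_def Collect_mem_eq by (auto simp: card_Diff_singleton_if)
  finally show ?thesis .
qed

lemma count_z_mset:
  "count (z_mset F 1) z = pair_count 1 (inverse z) - (if z = 1 then 1 else 0)"
proof -
  obtain c where z: "z = F c" using F_inv by metis
  have "c = 1 \<longleftrightarrow> z = 1" using z by (metis F_1 eq_iff)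
  thus ?thesis using count_z_mset_F[of c] pair_count_inverse[of c] z by (simp add: F_inverse)
qed

lemma card_Collect_count_z_mset:
  "card {z. P (count (z_mset F 1) z)} = card {b. P (pair_count 1 b - (if b = 1 then 1 else 0))}"
proof (rule card_Collect_bij)
  show "bij (inverse :: 'a \<Rightarrow> 'a)"
    by (rule bij_betw_byWitness[where f'=inverse]) auto
qed (simp add: count_z_mset)

lemma count_Vstar:
  "count (Vstar F) k = (if k = 0 then 0
     else card {b. b \<noteq> 1 \<and> pair_count 1 b = k} + (if pair_count 1 1 = Suc k then 1 else 0))"
proof -
  have count_eq: "count (Vstar F) k = card {z \<in> set_mset (z_mset F 1). count (z_mset F 1) z = k}"
    unfolding Vstar_def Vstar_at_def by (rule count_image_mset_mset_set) simp
  show ?thesis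
  proof (cases "k = 0")
    case False
    hence "{z \<in> set_mset (z_mset F 1). count (z_mset F 1) z = k} = {z. count (z_mset F 1) z = k}"
      by auto
    hence "count (Vstar F) k = card {z. count (z_mset F 1) z = k}"
      using count_eq by simp
    also have "\<dots> = card {b. pair_count 1 b - (if b = 1 then 1 else 0) = k}"
      by (rule card_Collect_count_z_mset)
    also have "{b. pair_count 1 b - (if b = 1 then 1 else 0) = k}
        = (if pair_count 1 1 = Suc k then insert 1 else id) {b. b \<noteq> 1 \<and> pair_count 1 b = k}"
      using False by auto
    finally show ?thesis using False by simp
  qed (use count_eq in simp)
qed

lemma size_Vstar:
  "size (Vstar F) = card {b. 0 < pair_count 1 b - (if b = 1 then 1 else 0)}"
proof -
  have "size (Vstar F) = card (set_mset (z_mset F 1))"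
    unfolding Vstar_def Vstar_at_def by simp
  also have "set_mset (z_mset F 1) = {z. 0 < count (z_mset F 1) z}" by auto
  finally show ?thesis by (simp only: card_Collect_count_z_mset)
qed

lemma card_pair_count_1_eq:
  "card {b. pair_count 1 b = k}
     = card {b. b \<noteq> 1 \<and> pair_count 1 b = k} + (if pair_count 1 1 = k then 1 else 0)"
proof -
  have "{b. pair_count 1 b = k}
      = (if pair_count 1 1 = k then insert 1 else id) {b. b \<noteq> 1 \<and> pair_count 1 b = k}"
    by auto
  thus ?thesis by simp
qed

lemma pair_count_pos_iff:
  "0 < pair_count c b \<longleftrightarrow> (\<exists>x y. x \<noteq> y \<and> x + y = c \<and> F x + F y = b)"
proof -
  have "0 < pair_count c b \<longleftrightarrow> (\<exists>q. card q = 2 \<and> (\<Sum>x\<in>q. x) = c \<and> (\<Sum>x\<in>q. F x) = b)"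
    unfolding pair_count_def by (auto simp: card_gt_0_iff)
  also have "\<dots> \<longleftrightarrow> (\<exists>x y. x \<noteq> y \<and> x + y = c \<and> F x + F y = b)"
  proof
    assume "\<exists>q. card q = 2 \<and> (\<Sum>x\<in>q. x) = c \<and> (\<Sum>x\<in>q. F x) = b"
    then obtain x y where "x \<noteq> y" "(\<Sum>v\<in>{x, y}. v) = c" "(\<Sum>v\<in>{x, y}. F v) = b"
      by (metis card_2_iff)
    thus "\<exists>x y. x \<noteq> y \<and> x + y = c \<and> F x + F y = b" by auto
  next
    assume "\<exists>x y. x \<noteq> y \<and> x + y = c \<and> F x + F y = b"
    then obtain x y where "x \<noteq> y" "x + y = c" "F x + F y = b" by blast
    thus "\<exists>q. card q = 2 \<and> (\<Sum>x\<in>q. x) = c \<and> (\<Sum>x\<in>q. F x) = b"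
      by (intro exI[of _ "{x, y}"]) simp
  qed
  finally show ?thesis .
qed

lemma v_F_eq_size_Vstar:
  "v_F F = size (Vstar F) + (if pair_count 1 1 = 1 then 1 else 0)"
proof -
  have "{x + inv F (1 + F x) | x. True} = {c. 0 < pair_count c 1}"
  proof (rule set_eqI)
    fix c
    have "F x + F y = 1 \<longleftrightarrow> y = inv F (F x + 1)" for x y
      by (metis F_inv inv_F add_eq_iff_swap add.commute)
    moreover have "x \<noteq> inv F (F x + 1)" for x
      using F_inv[of "F x + 1"] by (metis add_cancel_left_right one_neq_zero)
    ultimately have "(\<exists>x y. x \<noteq> y \<and> x + y = c \<and> F x + F y = 1)
        \<longleftrightarrow> (\<exists>x. c = x + inv F (1 + F x))"
      by (auto simp: add.commute)
    thus "c \<in> {x + inv F (1 + F x) | x. True} \<longleftrightarrow> c \<in> {c. 0 < pair_count c 1}"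
      by (simp add: pair_count_pos_iff)
  qed
  hence "v_F F = card {c. 0 < pair_count 1 (F (inverse c))}"
    unfolding v_F_def v_at_def by (simp add: pair_count_inverse)
  also have "\<dots> = card {b. 0 < pair_count 1 b}"
    by (rule card_Collect_bij[OF bij_F_inverse]) simp
  also have "{b. 0 < pair_count 1 b}
      = {b. 0 < pair_count 1 b - (if b = 1 then 1 else 0)} \<union> {1}"
    using pair_count_1_1_pos by auto
  finally show ?thesis
    by (simp add: size_Vstar) (use pair_count_1_1_pos in \<open>auto simp: card_insert_if\<close>)
qed

end

definition parity_coord :: "'a::zero \<Rightarrow> 'a option" where
  "parity_coord x = (if x = 0 then None else Some x)"

lemma bij_betw_parity_coord: "bij_betw parity_coord UNIV ext_coords"
  by (rule bij_betw_byWitness[where f' = "\<lambda>w. case w of None \<Rightarrow> 0 | Some x \<Rightarrow> x"])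
     (auto simp: parity_coord_def ext_coords_def split: option.splits)

lemma ext_code_F_subset: "X \<in> ext_code_F F \<Longrightarrow> X \<subseteq> ext_coords"
  unfolding ext_code_F_def code_F_def ext_coords_def by (auto split: if_splits)

lemma Some_image_Un_None_eq_iff:
  "Some ` A \<union> (if P then {None} else {}) = Some ` B \<union> (if Q then {None} else {})
     \<longleftrightarrow> A = B \<and> (P \<longleftrightarrow> Q)"
  by (auto simp: set_eq_iff image_iff split: if_splits)

lemma parity_coord_image: "parity_coord ` T = Some ` (T - {0}) \<union> (if 0 \<in> T then {None} else {})"
  by (auto simp: parity_coord_def image_iff)

lemma parity_coord_image_in_ext_code_F:
  fixes F :: "'a::{field,finite} \<Rightarrow> 'a"
  assumes "F 0 = 0"
  shows "parity_coord ` T \<in> ext_code_F F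
     \<longleftrightarrow> even (card T) \<and> (\<Sum>x\<in>T. x) = 0 \<and> (\<Sum>x\<in>T. F x) = 0"
proof -
  have sum_T: "(\<Sum>x\<in>T - {0}. f x) = (\<Sum>x\<in>T. f x)" if "f 0 = 0" for f :: "'a \<Rightarrow> 'a"
    using that by (intro sum.mono_neutral_left) auto
  have card_T: "card T = card (T - {0}) + (if 0 \<in> T then 1 else 0)"
    using card.remove[of T 0] by (cases "0 \<in> T") simp_all
  have "parity_coord ` T \<in> ext_code_F F
      \<longleftrightarrow> T - {0} \<in> code_F F \<and> (0 \<in> T \<longleftrightarrow> odd (card (T - {0})))"
    unfolding ext_code_F_def parity_coord_image
    by (auto simp: Some_image_Un_None_eq_iff)
  also have "\<dots> \<longleftrightarrow> even (card T) \<and> (\<Sum>x\<in>T. x) = 0 \<and> (\<Sum>x\<in>T. F x) = 0"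
  proof -
    have "T - {0} \<in> code_F F \<longleftrightarrow> (\<Sum>x\<in>T. x) = 0 \<and> (\<Sum>x\<in>T. F x) = 0"
      unfolding code_F_def using sum_T[of "\<lambda>x. x"] sum_T[of F] assms by auto
    moreover have "(0 \<in> T \<longleftrightarrow> odd (card (T - {0}))) \<longleftrightarrow> even (card T)"
      using card_T by (cases "0 \<in> T") auto
    ultimately show ?thesis by blast
  qed
  finally show ?thesis .
qed

lemma codes_equivalent_pullback:
  assumes \<phi>: "bij_betw \<phi> UNIV I" and equiv: "codes_equivalent I C1 C2"
    and C1: "\<And>X. X \<in> C1 \<Longrightarrow> X \<subseteq> I"
  shows "\<exists>g. bij g \<and> (\<forall>T. \<phi> ` T \<in> C1 \<longleftrightarrow> \<phi> ` (g ` T) \<in> C2)"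
proof -
  obtain \<sigma> where \<sigma>: "bij_betw \<sigma> I I" and C2: "C2 = (\<lambda>X. \<sigma> ` X) ` C1"
    using equiv unfolding codes_equivalent_def by blast
  define g where "g = inv_into UNIV \<phi> \<circ> \<sigma> \<circ> \<phi>"
  have "bij g"
    unfolding g_def using \<phi> \<sigma> bij_betw_inv_into[OF \<phi>] by (blast intro: bij_betw_trans)
  have "\<sigma> (\<phi> x) \<in> range \<phi>" for x
    using \<phi> \<sigma> by (auto simp: bij_betw_def)
  hence "\<phi> (g x) = \<sigma> (\<phi> x)" for x
    unfolding g_def by (simp add: f_inv_into_f)
  hence \<phi>_g: "\<phi> ` (g ` T) = \<sigma> ` (\<phi> ` T)" for T by (simp add: image_image)
  have "X \<in> C1 \<longleftrightarrow> \<sigma> ` X \<in> C2" if "X \<subseteq> I" for X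
  proof
    assume "\<sigma> ` X \<in> C2"
    then obtain Y where "Y \<in> C1" "\<sigma> ` X = \<sigma> ` Y" using C2 by blast
    moreover have "inj_on \<sigma> I" using \<sigma> by (simp add: bij_betw_def)
    ultimately have "X = Y" using that C1 by (simp add: inj_on_image_eq_iff)
    thus "X \<in> C1" using \<open>Y \<in> C1\<close> by simp
  qed (simp add: C2)
  moreover have "\<phi> ` T \<subseteq> I" for T using \<phi> by (auto simp: bij_betw_def)
  ultimately show ?thesis using \<open>bij g\<close> \<phi>_g by metis
qed

lemma (in char2_mult_perm) weight4_words_iff:
  "T \<in> weight4_words \<longleftrightarrow> card T = 4 \<and> parity_coord ` T \<in> ext_code_F F"
  unfolding weight4_words_def by (auto simp: parity_coord_image_in_ext_code_F)

lemma CCZ_equiv_imp_weight4_words_iso: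
  assumes "char2_mult_perm F1" and "char2_mult_perm F2" and "CCZ_equiv F1 F2"
  shows "\<exists>g. set_family_iso g (char2_mult_perm.weight4_words F1) (char2_mult_perm.weight4_words F2)"
proof -
  interpret M1: char2_mult_perm F1 by fact
  interpret M2: char2_mult_perm F2 by fact
  obtain g where "bij g" and g: "\<And>T. parity_coord ` T \<in> ext_code_F F1
      \<longleftrightarrow> parity_coord ` (g ` T) \<in> ext_code_F F2"
    using codes_equivalent_pullback[OF bij_betw_parity_coord \<open>CCZ_equiv F1 F2\<close>[unfolded CCZ_equiv_def]]
      ext_code_F_subset by metis
  have "card (g ` T) = card T" for T
    using \<open>bij g\<close> by (meson bij_is_inj card_image inj_on_subset subset_UNIV)
  hence "T \<in> M1.weight4_words \<longleftrightarrow> g ` T \<in> M2.weight4_words" for T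
    unfolding M1.weight4_words_iff M2.weight4_words_iff using g[of T] by simp
  hence "set_family_iso g M1.weight4_words M2.weight4_words"
    using \<open>bij g\<close> by unfold_locales
  thus ?thesis by blast
qed

lemma char2_mult_perm_power:
  assumes "card (UNIV :: 'a::{field,finite} set) = 2 ^ m" and "0 < t" and "coprime t (2 ^ m - 1)"
  shows "char2_mult_perm (\<lambda>x::'a. x ^ t)"
proof
  show "(1::'a) + 1 = 0" using assms(1) by (rule card_power_of_two_imp_one_add_one)
  have "inj (\<lambda>x::'a. x ^ t)" using assms by (intro inj_power_if_coprime) simp_all
  thus "bij (\<lambda>x::'a. x ^ t)" by (simp add: bij_def finite_UNIV_inj_surj)
qed (simp add: power_mult_distrib)

lemma Vstar_v_F_eq_if_weight4_iso:
  fixes F1 F2 :: "'a::{field,finite} \<Rightarrow> 'a"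
  assumes "char2_mult_perm F1" and "char2_mult_perm F2"
    and card: "3 \<le> card (UNIV :: 'a set)"
    and "set_family_iso g (char2_mult_perm.weight4_words F1) (char2_mult_perm.weight4_words F2)"
  shows "Vstar F1 = Vstar F2 \<and> v_F F1 = v_F F2"
proof -
  interpret M1: char2_mult_perm F1 by fact
  interpret M2: char2_mult_perm F2 by fact
  interpret iso: set_family_iso g M1.weight4_words M2.weight4_words by fact
  let ?n = "card (UNIV :: 'a set) - 1"
  text \<open>The parity coordinate \<open>0\<close> is the one point all of whose pairs have class size
    \<open>pair_count 1 1\<close>; the other points are all alike, so they contribute a multiple of \<open>?n\<close>.\<close>
  have "uniform_points M2.weight4_words ?n (M1.pair_count 1 1) mod ?n
      = uniform_points M1.weight4_words ?n (M1.pair_count 1 1) mod ?n"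
    by (simp only: iso.uniform_points_eq)
  hence "(if M1.pair_count 1 1 = M2.pair_count 1 1 then 1 else 0) mod ?n = 1 mod ?n"
    unfolding M1.uniform_points_weight4_mod M2.uniform_points_weight4_mod by simp
  hence K11: "M1.pair_count 1 1 = M2.pair_count 1 1"
    using card by (auto split: if_splits)
  have "card {b. M1.pair_count 1 b = k} = card {b. M2.pair_count 1 b = k}" if "0 < k" for k
    using iso.pairs_with_class_size_eq[of k] that card
    unfolding M1.pairs_with_class_size_weight4 M2.pairs_with_class_size_weight4 by simp
  hence "card {b. b \<noteq> 1 \<and> M1.pair_count 1 b = k} = card {b. b \<noteq> 1 \<and> M2.pair_count 1 b = k}"
    if "0 < k" for k
    using that K11 by (simp add: M1.card_pair_count_1_eq M2.card_pair_count_1_eq)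
  hence Vstar: "Vstar F1 = Vstar F2"
    using K11 by (intro multiset_eqI) (simp add: M1.count_Vstar M2.count_Vstar)
  show ?thesis
    using Vstar K11 by (simp add: M1.v_F_eq_size_Vstar M2.v_F_eq_size_Vstar)
qed

theorem mainTheorem13:
  fixes t1 t2 m :: nat
  assumes card: "card (UNIV :: 'a::{field,finite} set) = 2 ^ m"
    and t1: "0 < t1" "coprime t1 (2 ^ m - 1)"
    and t2: "0 < t2" "coprime t2 (2 ^ m - 1)"
    and ccz: "CCZ_equiv (\<lambda>x::'a. x ^ t1) (\<lambda>x::'a. x ^ t2)"
  shows "Vstar (\<lambda>x::'a. x ^ t1) = Vstar (\<lambda>x::'a. x ^ t2)
       \<and> v_F (\<lambda>x::'a. x ^ t1) = v_F (\<lambda>x::'a. x ^ t2)"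
proof (cases "card (UNIV :: 'a set) \<le> 2")
  case True
  have "x ^ t1 = x ^ t2" for x :: 'a
    using card_le_two_field_elements[OF True, of x] t1(1) t2(1) by (auto simp: zero_power)
  hence "(\<lambda>x::'a. x ^ t1) = (\<lambda>x. x ^ t2)" by simp
  thus ?thesis by simp
next
  case False
  have "char2_mult_perm (\<lambda>x::'a. x ^ t1)" and "char2_mult_perm (\<lambda>x::'a. x ^ t2)"
    using card t1 t2 by (auto intro: char2_mult_perm_power)
  moreover from calculation obtain g where "set_family_iso g
      (char2_mult_perm.weight4_words (\<lambda>x::'a. x ^ t1))
      (char2_mult_perm.weight4_words (\<lambda>x::'a. x ^ t2))"
    using ccz by (blast dest: CCZ_equiv_imp_weight4_words_iso)
  ultimately show ?thesis
    using False by (intro Vstar_v_F_eq_if_weight4_iso) simp_all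
qed

end
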